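(* Let $T=(T_{r,k})_{r,k\ge 0}$ be a number triangle such that every major diagonal $(T_{r,k})_{k\ge 0}$ and every minor diagonal $(T_{r,k})_{r\ge 0}$ is an arithmetic sequence of integers. Then $T$ is a Generalized Rascal Triangle: there exist $c,d,d_1,d_2\in\mathbb{Z}$ with $T_{r,k}=c+kd_1+rd_2+rkd$ for all $r,k\ge 0$.
   Context: A number triangle is an array of integers $T_{r,k}$ indexed by integers $r,k\ge 0$, arranged so that row $n$ consists of entries with $r+k=n$. For $c,d,d_1,d_2\in\mathbb{Z}$, the Generalized Rascal Triangle $T(c,d,d_1,d_2)$ is the number triangle with $T_{r,k}=c+kd_1+rd_2+rkd$. *)

theory Defs
  imports Main
begin

definition arith_seq :: "(nat \<Rightarrow> int) \<Rightarrow> bool" where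
  "arith_seq a \<longleftrightarrow> (\<exists>d. \<forall>n. a (Suc n) = a n + d)"

definition gen_rascal :: "int \<Rightarrow> int \<Rightarrow> int \<Rightarrow> int \<Rightarrow> nat \<Rightarrow> nat \<Rightarrow> int" where
  "gen_rascal c d d1 d2 r k = c + int k * d1 + int r * d2 + int r * int k * d"

end

theory Submission
  imports Defs
begin

(* Each row is determined by its entries in columns 0 and 1, and these two columns are
   themselves arithmetic in r; substituting gives an expression bilinear in r and k. *)

lemma arith_seq_nth:
  assumes "arith_seq a"
  shows "a n = a 0 + int n * (a 1 - a 0)"
proof -
  obtain d where step: "\<And>n. a (Suc n) = a n + d"
    using assms unfolding arith_seq_def by blast
  have "a n = a 0 + int n * d"
    by (induction n) (simp_all add: step algebra_simps)
  moreover have "d = a 1 - a 0"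
    using step[of 0] by simp
  ultimately show ?thesis by simp
qed

theorem mainTheorem6:
  fixes T :: "nat \<Rightarrow> nat \<Rightarrow> int"
  assumes major: "\<And>r. arith_seq (\<lambda>k. T r k)"
    and minor: "\<And>k. arith_seq (\<lambda>r. T r k)"
  shows "\<exists>c d d1 d2. \<forall>r k. T r k = gen_rascal c d d1 d2 r k"
proof (intro exI allI)
  fix r k
  have row: "T r k = T r 0 + int k * (T r 1 - T r 0)"
    using arith_seq_nth[OF major[of r]] .
  have column0: "T r 0 = T 0 0 + int r * (T 1 0 - T 0 0)"
    using arith_seq_nth[OF minor[of 0]] .
  have column1: "T r 1 = T 0 1 + int r * (T 1 1 - T 0 1)"
    using arith_seq_nth[OF minor[of 1]] .
  show "T r k = gen_rascal (T 0 0) (T 1 1 - T 1 0 - T 0 1 + T 0 0)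
                  (T 0 1 - T 0 0) (T 1 0 - T 0 0) r k"
    unfolding row column0 column1 gen_rascal_def by (simp add: algebra_simps)
qed

end
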